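(* Assume $s\ge1$, and let $a\in(0,1)$, $r\ge1$. Let $Y_1,\dots,Y_n$ be i.i.d. with the mixture distribution $\tfrac12 N(\theta^*,\sigma^2I_d)+\tfrac12 N(-\theta^*,\sigma^2I_d)$, let $\hat T:=\frac1n\sum_{i=1}^n(\|Y_i\|^2-d\sigma^2)$ and $\hat T_+:=\max\{\hat T,0\}$, and, conditionally on $Y_1,\dots,Y_n$, let $\theta_0\sim N\big(0,(\hat T_++\sigma^2/2)I_d\big)$. Let $E:=\{|\hat T-\|\theta^*\|^2|<\sigma^2/2\}$. Then $$\mathbb{P}\big(\theta_0\in\tilde{\mathcal{D}}_{a,r}\big)\ge\big[2\Phi(-a)-\mathbb{P}(\chi^2_d>r^2/2)\big]\,\mathbb{P}(E),$$ where $\Phi$ is the standard normal cdf and $\chi^2_d$ a chi-square variable with $d$ degrees of freedom.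
   Context: Fix $d\ge1$, $\sigma>0$ and $\theta^*\in\mathbb{R}^d\setminus\{0\}$; $s:=\|\theta^*\|/\sigma$. For $a\in(0,1)$ and $r\ge1$, let $\tilde{\mathcal{D}}_{a,r}:=\{\theta\in\mathbb{R}^d:\ |\langle\theta,\theta^*\rangle|\ge a\|\theta^*\|^2\ \text{and}\ \|\theta\|\le r\|\theta^*\|\}$. The probability on the left is with respect to the joint law of $(Y_1,\dots,Y_n,\theta_0)$. *)

theory Defs
  imports "HOL-Probability.Probability"
begin

definition iso_gauss_density :: "'a::euclidean_space \<Rightarrow> real \<Rightarrow> 'a \<Rightarrow> real" where
  "iso_gauss_density mu v x =
     (2 * pi * v) powr (- real DIM('a) / 2) * exp (- (norm (x - mu))\<^sup>2 / (2 * v))"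

definition iso_gauss :: "'a::euclidean_space \<Rightarrow> real \<Rightarrow> 'a measure" where
  "iso_gauss mu v = density lborel (\<lambda>x. ennreal (iso_gauss_density mu v x))"

definition sym_mixture :: "'a::euclidean_space \<Rightarrow> real \<Rightarrow> 'a measure" where
  "sym_mixture theta sg = density lborel (\<lambda>x. ennreal
      (1/2 * iso_gauss_density theta (sg\<^sup>2) x + 1/2 * iso_gauss_density (- theta) (sg\<^sup>2) x))"

text \<open>Law of the sample (Y_0,...,Y_{n-1}), i.i.d. from the mixture.\<close>
definition sample_law :: "nat \<Rightarrow> 'a::euclidean_space \<Rightarrow> real \<Rightarrow> (nat \<Rightarrow> 'a) measure" where
  "sample_law n theta sg = PiM {..<n} (\<lambda>_. sym_mixture theta sg)"

definition T_hat :: "nat \<Rightarrow> real \<Rightarrow> (nat \<Rightarrow> 'a::euclidean_space) \<Rightarrow> real" where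
  "T_hat n sg Y = (1 / real n) * (\<Sum>i<n. (norm (Y i))\<^sup>2 - real DIM('a) * sg\<^sup>2)"

definition T_hat_plus :: "nat \<Rightarrow> real \<Rightarrow> (nat \<Rightarrow> 'a::euclidean_space) \<Rightarrow> real" where
  "T_hat_plus n sg Y = max (T_hat n sg Y) 0"

text \<open>Marginal law of theta_0, where conditionally on Y,
  theta_0 ~ N(0, (T_hat_plus + sg^2/2) I_d).\<close>
definition theta0_law :: "nat \<Rightarrow> 'a::euclidean_space \<Rightarrow> real \<Rightarrow> 'a measure" where
  "theta0_law n theta sg =
     bind (sample_law n theta sg) (\<lambda>Y. iso_gauss 0 (T_hat_plus n sg Y + sg\<^sup>2 / 2))"

definition D_tilde :: "'a::euclidean_space \<Rightarrow> real \<Rightarrow> real \<Rightarrow> 'a set" where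
  "D_tilde theta a r = {x. \<bar>x \<bullet> theta\<bar> \<ge> a * (norm theta)\<^sup>2 \<and> norm x \<le> r * norm theta}"

definition Phi :: "real \<Rightarrow> real" where
  "Phi x = cdf (density lborel (\<lambda>t. ennreal (std_normal_density t))) x"

definition chi2_density :: "nat \<Rightarrow> real \<Rightarrow> real" where
  "chi2_density k x = (if x > 0 then
      x powr (real k / 2 - 1) * exp (- x / 2) / (2 powr (real k / 2) * Gamma (real k / 2)) else 0)"

definition chi2 :: "nat \<Rightarrow> real measure" where
  "chi2 k = density lborel (\<lambda>x. ennreal (chi2_density k x))"

end

theory Submission
  imports Defs
begin

text \<open>Conditionally on the sample, \<open>\<theta>\<^sub>0\<close> is an isotropic Gaussian whose variance
  \<open>v = T\<^sub>+ + \<sigma>\<^sup>2/2\<close> lies in \<open>[\<parallel>\<theta>*\<parallel>\<^sup>2, 2\<parallel>\<theta>*\<parallel>\<^sup>2]\<close> on the event \<open>E\<close>, because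
  \<open>\<sigma> \<le> \<parallel>\<theta>*\<parallel>\<close>. For such a Gaussian the projection \<open>\<langle>x, \<theta>*\<rangle>\<close> is \<open>N(0, v\<parallel>\<theta>*\<parallel>\<^sup>2)\<close> with
  standard deviation at least \<open>\<parallel>\<theta>*\<parallel>\<^sup>2\<close>, so \<open>|\<langle>x, \<theta>*\<rangle>| \<ge> a\<parallel>\<theta>*\<parallel>\<^sup>2\<close> has probability at
  least \<open>2\<Phi>(-a)\<close>; and \<open>\<parallel>x\<parallel>\<^sup>2/v\<close> is \<open>\<chi>\<^sup>2\<^sub>d\<close>, so \<open>\<parallel>x\<parallel> > r\<parallel>\<theta>*\<parallel>\<close> has probability at most
  \<open>P(\<chi>\<^sup>2\<^sub>d > r\<^sup>2/2)\<close>. A union bound gives the conditional bound on \<open>E\<close>, and integrating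
  it over the sample gives the theorem.\<close>

lemma iso_gauss_density_measurable[measurable]: "iso_gauss_density mu v \<in> borel_measurable borel"
  unfolding iso_gauss_density_def by measurable

lemma chi2_density_measurable[measurable]: "chi2_density k \<in> borel_measurable borel"
  unfolding chi2_density_def by measurable

lemma sets_iso_gauss[measurable_cong, simp]: "sets (iso_gauss mu v) = sets borel"
  by (simp add: iso_gauss_def)

lemma sets_sym_mixture[measurable_cong, simp]: "sets (sym_mixture theta sg) = sets borel"
  by (simp add: sym_mixture_def)

lemma distr_norm_lborel:
  defines "d \<equiv> DIM('a::euclidean_space)"
  shows "distr (lborel::'a measure) borel norm =
    density lborel (\<lambda>\<rho>. ennreal (indicator {0..} \<rho> * (unit_ball_vol d * real d * \<rho> ^ (d - 1))))"
    (is "?M = ?N")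
proof (rule measure_eqI_generator_eq[where E="range lessThan" and \<Omega>=UNIV and A="\<lambda>i. {..< real i}"])
  show "Int_stable (range lessThan :: real set set)"
  proof (rule Int_stableI)
    fix A B :: "real set" assume "A \<in> range lessThan" "B \<in> range lessThan"
    then obtain a b where "A = {..<a}" "B = {..<b}" by auto
    then have "A \<inter> B = {..<min a b}" by auto
    then show "A \<inter> B \<in> range lessThan" by auto
  qed
  show "range lessThan \<subseteq> Pow (UNIV::real set)" by auto
  have borel_Iio': "sets (borel::real measure) = sigma_sets UNIV (range lessThan)"
    by (subst borel_Iio) simp
  then show "sets ?M = sigma_sets UNIV (range lessThan)" "sets ?N = sigma_sets UNIV (range lessThan)"
    by simp_all
  show "range (\<lambda>i. {..< real i}) \<subseteq> range lessThan" by auto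
  show "(\<Union>i. {..< real i}) = UNIV" by (auto intro: reals_Archimedean2)
  have d1: "d \<ge> 1" unfolding d_def by (simp add: DIM_positive Suc_leI)
  have "emeasure ?M {..<x} = emeasure ?N {..<x}" for x :: real
  proof (cases "x > 0")
    case True
    have "emeasure ?M {..<x} = emeasure lborel (ball (0::'a) x)"
      by (subst emeasure_distr) (auto intro!: arg_cong2[where f=emeasure] simp: ball_def)
    also have "\<dots> = ennreal (unit_ball_vol d * x ^ d)"
      using True emeasure_ball[of x "0::'a"] by (simp add: d_def)
    also have "\<dots> = (\<integral>\<^sup>+\<rho>. ennreal (unit_ball_vol d * real d * \<rho> ^ (d - 1)) * indicator {0..x} \<rho> \<partial>lborel)"
    proof (subst nn_integral_FTC_Icc[where F="\<lambda>\<rho>. unit_ball_vol d * \<rho> ^ d"])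
      fix \<rho> :: real assume "\<rho> \<in> {0..x}"
      show "((\<lambda>\<rho>. unit_ball_vol d * \<rho> ^ d) has_real_derivative unit_ball_vol d * real d * \<rho> ^ (d - 1)) (at \<rho>)"
        by (auto intro!: derivative_eq_intros)
      show "0 \<le> unit_ball_vol d * real d * \<rho> ^ (d - 1)"
        using \<open>\<rho> \<in> {0..x}\<close> by auto
    qed (use True d1 in auto)
    also have "\<dots> = emeasure ?N {..<x}"
      using AE_lborel_singleton[of x]
      by (subst emeasure_density) (auto intro!: nn_integral_cong_AE split: split_indicator)
    finally show ?thesis .
  next
    case False
    then have "norm -` {..<x} = ({}::'a set)"
      by (auto simp: not_less) (meson norm_ge_zero order.trans linorder_not_less)
    then have "emeasure ?M {..<x} = 0"
      by (subst emeasure_distr) auto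
    moreover have "emeasure ?N {..<x} = 0"
      using False by (subst emeasure_density) (auto intro!: nn_integral_zero' split: split_indicator)
    ultimately show ?thesis by simp
  qed
  then show "\<And>X. X \<in> range lessThan \<Longrightarrow> emeasure ?M X = emeasure ?N X" by auto
  show "emeasure ?M {..< real i} \<noteq> \<infinity>" for i
  proof -
    have "emeasure ?M {..< real i} = emeasure lborel (norm -` {..<real i} :: 'a set)"
      by (subst emeasure_distr) auto
    also have "\<dots> \<le> emeasure lborel (ball (0::'a) (real i))"
      by (intro emeasure_mono) (auto simp: ball_def)
    also have "\<dots> < \<infinity>" by (simp add: emeasure_ball)
    finally show ?thesis by simp
  qed
qed

text \<open>Density of \<open>\<parallel>x\<parallel>\<close> for \<open>x \<sim> N(0, v I\<^sub>d)\<close>: the Gaussian density on the sphere of radius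
  \<open>\<rho>\<close> times its surface area \<open>d \<omega>\<^sub>d \<rho>\<^sup>d\<^sup>-\<^sup>1\<close>.\<close>
definition gauss_norm_density :: "nat \<Rightarrow> real \<Rightarrow> real \<Rightarrow> real" where
  "gauss_norm_density d v \<rho> =
     unit_ball_vol d * real d * \<rho> ^ (d - 1) * ((2 * pi * v) powr (- real d / 2) * exp (- \<rho>\<^sup>2 / (2 * v)))"

lemma chi2_density_substitution:
  fixes d :: nat and v \<rho> :: real
  assumes d: "d \<ge> 1" and v: "v > 0" and \<rho>: "\<rho> > 0"
  shows "chi2_density d (\<rho>\<^sup>2 / v) * (2 * \<rho> / v) = gauss_norm_density d v \<rho>"
proof -
  define p where "p = real d / 2"
  have p: "p > 0" using d by (simp add: p_def)
  have Gp: "Gamma p > 0" using p by simp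
  have e: "exp (- (\<rho>\<^sup>2 / v) / 2) = exp (- \<rho>\<^sup>2 / (2 * v))" by (simp add: field_simps)
  have pow_sq: "(\<rho>\<^sup>2 / v) powr (p - 1) = \<rho> powr (2 * p - 2) / v powr (p - 1)"
  proof -
    have "\<rho>\<^sup>2 = \<rho> powr 2" using \<rho> by (simp add: powr_realpow)
    then show ?thesis by (simp add: powr_divide powr_powr \<rho> v algebra_simps)
  qed
  have pow_rho: "\<rho> powr (2 * p - 2) * \<rho> = \<rho> ^ (d - 1)"
  proof -
    have "\<rho> powr (2 * p - 2) * \<rho> = \<rho> powr (2 * p - 1)"
      using \<rho> powr_add[of \<rho> "2 * p - 2" 1] by simp
    also have "2 * p - 1 = real (d - 1)" using d by (simp add: p_def of_nat_diff)
    finally show ?thesis using \<rho> by (simp add: powr_realpow)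
  qed
  have pow_v: "v powr (p - 1) * v = v powr p"
    using v powr_add[of v "p - 1" 1] by simp
  have pow_2piv: "(2 * pi * v) powr (- p) = 1 / (2 powr p * pi powr p * v powr p)"
    by (simp add: powr_minus powr_mult divide_inverse)
  have "Gamma (p + 1) = p * Gamma p"
    using p by (intro Gamma_plus1) (auto simp: nonpos_Ints_def)
  then have "unit_ball_vol d = pi powr p / (p * Gamma p)"
    unfolding unit_ball_vol_def p_def[symmetric] by simp
  then have U: "unit_ball_vol d * real d = 2 * pi powr p / Gamma p"
    using p by (simp add: p_def field_simps)
  have "chi2_density d (\<rho>\<^sup>2 / v) * (2 * \<rho> / v)
      = 2 * (\<rho> powr (2 * p - 2) * \<rho>) / (v powr (p - 1) * v) * exp (- \<rho>\<^sup>2 / (2 * v)) / (2 powr p * Gamma p)"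
    unfolding chi2_density_def p_def[symmetric] pow_sq e using v \<rho> by (simp add: field_simps)
  also have "\<dots> = (2 * pi powr p / Gamma p) * \<rho> ^ (d - 1) * ((2 * pi * v) powr (- p) * exp (- \<rho>\<^sup>2 / (2 * v)))"
    unfolding pow_rho pow_v pow_2piv using v Gp by (simp add: field_simps)
  finally show ?thesis by (simp add: gauss_norm_density_def U p_def)
qed

lemma nn_integral_chi2_density_Icc:
  assumes d: "d \<ge> 1" and v: "v > 0" and R: "R > 0" and "R \<le> u"
  shows "(\<integral>\<^sup>+s. ennreal (chi2_density d s) * indicator {R\<^sup>2 / v..u\<^sup>2 / v} s \<partial>lborel)
       = (\<integral>\<^sup>+\<rho>. ennreal (gauss_norm_density d v \<rho>) * indicator {R..u} \<rho> \<partial>lborel)"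
proof -
  define g where "g = (\<lambda>\<rho>::real. \<rho>\<^sup>2 / v)"
  have "(\<integral>\<^sup>+s. ennreal (chi2_density d s) * indicator {g R..g u} s \<partial>lborel)
      = (\<integral>\<^sup>+s. ennreal (chi2_density d s * indicator {g R..g u} s) \<partial>lborel)"
    by (intro nn_integral_cong) (simp split: split_indicator)
  also have "\<dots> = (\<integral>\<^sup>+\<rho>. ennreal (chi2_density d (g \<rho>) * (2 * \<rho> / v) * indicator {R..u} \<rho>) \<partial>lborel)"
  proof (rule nn_integral_substitution)
    show "set_borel_measurable borel {g R..g u} (chi2_density d)"
      unfolding set_borel_measurable_def by measurable
    show "(g has_real_derivative 2 * \<rho> / v) (at \<rho>)" for \<rho>
      unfolding g_def using v by (auto intro!: derivative_eq_intros)
    show "continuous_on {R..u} (\<lambda>\<rho>. 2 * \<rho> / v)"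
      using v by (intro continuous_intros) auto
  qed (use R v \<open>R \<le> u\<close> in auto)
  also have "\<dots> = (\<integral>\<^sup>+\<rho>. ennreal (gauss_norm_density d v \<rho>) * indicator {R..u} \<rho> \<partial>lborel)"
  proof (intro nn_integral_cong)
    fix \<rho> :: real
    show "ennreal (chi2_density d (g \<rho>) * (2 * \<rho> / v) * indicator {R..u} \<rho>)
        = ennreal (gauss_norm_density d v \<rho>) * indicator {R..u} \<rho>"
      using chi2_density_substitution[OF d v, of \<rho>] R
      by (cases "\<rho> \<in> {R..u}") (auto simp: g_def)
  qed
  finally show ?thesis by (simp add: g_def)
qed

lemma nn_integral_atLeast_SUP:
  fixes f :: "real \<Rightarrow> ennreal" and u :: "nat \<Rightarrow> real"
  assumes [measurable]: "f \<in> borel_measurable borel" and u: "incseq u" "\<And>x. \<exists>n. x \<le> u n"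
  shows "(\<integral>\<^sup>+x. f x * indicator {a..} x \<partial>lborel) = (SUP n. \<integral>\<^sup>+x. f x * indicator {a..u n} x \<partial>lborel)"
proof -
  have "(SUP n. \<integral>\<^sup>+x. f x * indicator {a..u n} x \<partial>lborel) = (\<integral>\<^sup>+x. (SUP n. f x * indicator {a..u n} x) \<partial>lborel)"
  proof (rule nn_integral_monotone_convergence_SUP[symmetric])
    show "incseq (\<lambda>n x. f x * indicator {a..u n} x)"
      using u(1) by (auto simp: incseq_def le_fun_def mono_def split: split_indicator intro: order_trans)
  qed auto
  also have "\<dots> = (\<integral>\<^sup>+x. f x * indicator {a..} x \<partial>lborel)"
  proof (intro nn_integral_cong antisym)
    fix x
    show "(SUP n. f x * indicator {a..u n} x) \<le> f x * indicator {a..} x"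
      by (intro SUP_least) (auto split: split_indicator)
    obtain N where "x \<le> u N" using u(2) by blast
    then have "f x * indicator {a..} x = f x * indicator {a..u N} x"
      by (auto split: split_indicator)
    also have "\<dots> \<le> (SUP n. f x * indicator {a..u n} x)" by (rule SUP_upper) auto
    finally show "f x * indicator {a..} x \<le> (SUP n. f x * indicator {a..u n} x)" .
  qed
  finally show ?thesis ..
qed

lemma emeasure_iso_gauss_norm_greater:
  fixes R v :: real
  assumes "R > 0"
  shows "emeasure (iso_gauss (0::'a::euclidean_space) v) {x. norm x > R}
       = (\<integral>\<^sup>+\<rho>. ennreal (gauss_norm_density DIM('a) v \<rho>) * indicator {R..} \<rho> \<partial>lborel)"
proof -
  define d where "d = DIM('a)"
  define H where "H = (\<lambda>\<rho>::real. ennreal ((2 * pi * v) powr (- real d / 2) * exp (- \<rho>\<^sup>2 / (2 * v))) * indicator {R<..} \<rho>)"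
  have [measurable]: "H \<in> borel_measurable borel" unfolding H_def by measurable
  have "emeasure (iso_gauss (0::'a) v) {x. norm x > R}
      = (\<integral>\<^sup>+x. ennreal (iso_gauss_density 0 v x) * indicator {x. norm x > R} x \<partial>(lborel::'a measure))"
    unfolding iso_gauss_def by (rule emeasure_density) auto
  also have "\<dots> = (\<integral>\<^sup>+x. H (norm x) \<partial>(lborel::'a measure))"
    by (intro nn_integral_cong) (simp add: H_def iso_gauss_density_def d_def split: split_indicator)
  also have "\<dots> = (\<integral>\<^sup>+\<rho>. H \<rho> \<partial>distr (lborel::'a measure) borel norm)"
    by (subst nn_integral_distr) auto
  also have "\<dots> = (\<integral>\<^sup>+\<rho>. ennreal (indicator {0..} \<rho> * (unit_ball_vol d * real d * \<rho> ^ (d - 1))) * H \<rho> \<partial>lborel)"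
    unfolding distr_norm_lborel d_def by (subst nn_integral_density) auto
  also have "\<dots> = (\<integral>\<^sup>+\<rho>. ennreal (gauss_norm_density d v \<rho>) * indicator {R..} \<rho> \<partial>lborel)"
  proof (rule nn_integral_cong_AE)
    show "AE \<rho> in lborel. ennreal (indicator {0..} \<rho> * (unit_ball_vol d * real d * \<rho> ^ (d - 1))) * H \<rho>
        = ennreal (gauss_norm_density d v \<rho>) * indicator {R..} \<rho>"
      using AE_lborel_singleton[of R]
      by eventually_elim (use \<open>R > 0\<close> in \<open>auto simp: H_def gauss_norm_density_def ennreal_mult'[symmetric] split: split_indicator\<close>)
  qed
  finally show ?thesis by (simp add: d_def)
qed

lemma emeasure_iso_gauss_norm_greater_chi2:
  fixes R v :: real
  assumes v: "v > 0" and R: "R > 0"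
  shows "emeasure (iso_gauss (0::'a::euclidean_space) v) {x. norm x > R} = emeasure (chi2 DIM('a)) {R\<^sup>2 / v <..}"
proof -
  define d where "d = DIM('a)"
  have d1: "d \<ge> 1" unfolding d_def by (simp add: DIM_positive Suc_leI)
  have unbounded: "\<exists>n. x \<le> (R + real n)\<^sup>2 / v" for x
  proof -
    obtain n :: nat where n: "max 1 (x * v) \<le> real n" using real_arch_simple by blast
    have "x * v \<le> R + real n" using n R by simp
    also have "\<dots> \<le> (R + real n)\<^sup>2"
      using n R by (simp add: power2_eq_square)
    finally show ?thesis using v by (auto simp: field_simps intro!: exI[of _ n])
  qed
  have "emeasure (iso_gauss (0::'a) v) {x. norm x > R}
      = (\<integral>\<^sup>+\<rho>. ennreal (gauss_norm_density d v \<rho>) * indicator {R..} \<rho> \<partial>lborel)"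
    unfolding d_def by (rule emeasure_iso_gauss_norm_greater[OF R])
  also have "\<dots> = (SUP n. \<integral>\<^sup>+\<rho>. ennreal (gauss_norm_density d v \<rho>) * indicator {R..R + real n} \<rho> \<partial>lborel)"
  proof (rule nn_integral_atLeast_SUP)
    show "\<exists>n. x \<le> R + real n" for x
      using real_arch_simple[of "x - R"] by (auto simp: algebra_simps)
  qed (auto simp: gauss_norm_density_def incseq_def)
  also have "\<dots> = (SUP n. \<integral>\<^sup>+s. ennreal (chi2_density d s) * indicator {R\<^sup>2 / v..(R + real n)\<^sup>2 / v} s \<partial>lborel)"
    using R by (intro SUP_cong refl nn_integral_chi2_density_Icc[OF d1 v, symmetric]) auto
  also have "\<dots> = (\<integral>\<^sup>+s. ennreal (chi2_density d s) * indicator {R\<^sup>2 / v..} s \<partial>lborel)"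
    using R v unbounded
    by (intro nn_integral_atLeast_SUP[symmetric])
      (auto simp: incseq_def intro!: divide_right_mono power_mono)
  also have "\<dots> = emeasure (chi2 d) {R\<^sup>2 / v <..}"
    using AE_lborel_singleton[of "R\<^sup>2 / v"] unfolding chi2_def
    by (subst emeasure_density) (auto intro!: nn_integral_cong_AE split: split_indicator)
  finally show ?thesis by (simp add: d_def)
qed

definition from_coords :: "('a::euclidean_space \<Rightarrow> real) \<Rightarrow> 'a" where
  "from_coords f = (\<Sum>b\<in>Basis. f b *\<^sub>R b)"

definition gauss_coords :: "real \<Rightarrow> ('a::euclidean_space \<Rightarrow> real) measure" where
  "gauss_coords v = PiM Basis (\<lambda>_. density lborel (normal_density 0 (sqrt v)))"

lemma inner_from_coords: "from_coords f \<bullet> y = (\<Sum>b\<in>Basis. f b * (b \<bullet> y))"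
  by (simp add: from_coords_def inner_sum_left)

lemma norm_from_coords_sq: "(norm (from_coords f))\<^sup>2 = (\<Sum>b\<in>Basis. (f b)\<^sup>2)"
proof -
  have "from_coords f \<bullet> c = f c" if "c \<in> Basis" for c
    using that by (simp add: inner_from_coords inner_Basis if_distrib cong: if_cong)
  then have "from_coords f \<bullet> from_coords f = (\<Sum>b\<in>Basis. f b * f b)"
    by (simp add: inner_from_coords[of f "from_coords f"] inner_commute)
  then show ?thesis
    by (subst power2_norm_eq_inner) (simp add: power2_eq_square)
qed

lemma measurable_gauss_coords_component:
  "b \<in> Basis \<Longrightarrow> (\<lambda>f. f b) \<in> borel_measurable (gauss_coords v)"
  unfolding gauss_coords_def by measurable

lemma measurable_from_coords:
  assumes "sets M = sets (borel :: real measure)"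
  shows "from_coords \<in> borel_measurable (PiM (Basis :: 'a::euclidean_space set) (\<lambda>_. M))"
proof -
  have "sets (PiM (Basis :: 'a set) (\<lambda>_. M)) = sets (PiM Basis (\<lambda>_. borel))"
    using assms by (intro sets_PiM_cong) auto
  moreover have "from_coords \<in> borel_measurable (PiM (Basis :: 'a set) (\<lambda>_. borel))"
    unfolding from_coords_def by measurable
  ultimately show ?thesis
    by (metis measurable_cong_sets)
qed

lemma measurable_from_coords_gauss_coords: "from_coords \<in> borel_measurable (gauss_coords v)"
  unfolding gauss_coords_def by (rule measurable_from_coords) simp

lemma prob_space_gauss_coords: "v > 0 \<Longrightarrow> prob_space (gauss_coords v)"
  unfolding gauss_coords_def
  by (intro prob_space_PiM) (use prob_space_normal_density[of "sqrt v" 0] in simp)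

lemma distr_gauss_coords_component:
  assumes "v > 0" and "b \<in> Basis"
  shows "distr (gauss_coords v) borel (\<lambda>f. f b) = density lborel (normal_density 0 (sqrt v))"
proof -
  have "distr (gauss_coords v) borel (\<lambda>f. f b)
      = distr (gauss_coords v) (density lborel (normal_density 0 (sqrt v))) (\<lambda>f. f b)"
    by (rule distr_cong) (auto simp: gauss_coords_def)
  also have "\<dots> = density lborel (normal_density 0 (sqrt v))"
    unfolding gauss_coords_def using assms prob_space_normal_density[of "sqrt v" 0]
    by (intro distr_PiM_component) auto
  finally show ?thesis .
qed

lemma distributed_gauss_coords_component:
  assumes "v > 0" and "b \<in> Basis"
  shows "distributed (gauss_coords v) lborel (\<lambda>f. f b) (normal_density 0 (sqrt v))"
proof -
  have "distr (gauss_coords v) lborel (\<lambda>f. f b) = distr (gauss_coords v) borel (\<lambda>f. f b)"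
    by (rule distr_cong) auto
  then show ?thesis
    using assms by (simp add: distributed_def distr_gauss_coords_component measurable_gauss_coords_component)
qed

lemma indep_vars_gauss_coords:
  assumes "v > 0"
  shows "prob_space.indep_vars (gauss_coords v) (\<lambda>_. borel) (\<lambda>b f. f b) Basis"
proof -
  interpret P: prob_space "gauss_coords v" by (rule prob_space_gauss_coords[OF assms])
  have "distr (gauss_coords v) (PiM Basis (\<lambda>_. borel)) (\<lambda>f. \<lambda>b\<in>Basis. f b) = distr (gauss_coords v) (gauss_coords v) (\<lambda>f. f)"
    by (rule distr_cong)
      (auto simp: gauss_coords_def space_PiM PiE_def extensional_def restrict_def intro!: sets_PiM_cong)
  also have "\<dots> = PiM Basis (\<lambda>b. distr (gauss_coords v) borel (\<lambda>f. f b))"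
    using assms by (simp add: distr_gauss_coords_component cong: PiM_cong) (simp add: gauss_coords_def)
  finally show ?thesis
    by (subst P.indep_vars_iff_distr_eq_PiM') (auto intro: measurable_gauss_coords_component)
qed

lemma iso_gauss_density_from_coords:
  assumes v: "v > 0"
  shows "ennreal (iso_gauss_density 0 v (from_coords f))
       = (\<Prod>b\<in>Basis. ennreal (normal_density 0 (sqrt v) (f b)))"
proof -
  have "normal_density 0 (sqrt v) t = (2 * pi * v) powr (-1/2) * exp (- t\<^sup>2 / (2 * v))" for t
    using v by (simp add: normal_density_def powr_minus_divide powr_half_sqrt)
  then have "(\<Prod>b\<in>Basis. normal_density 0 (sqrt v) (f b))
      = ((2 * pi * v) powr (-1/2)) ^ DIM('a) * exp (- (\<Sum>b\<in>Basis. (f b)\<^sup>2) / (2 * v))"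
    by (simp add: prod.distrib exp_sum[symmetric] sum_divide_distrib[symmetric] sum_negf)
  also have "((2 * pi * v) powr (-1/2)) ^ DIM('a) = (2 * pi * v) powr (- real DIM('a) / 2)"
    using v by (simp add: powr_realpow[symmetric] powr_powr)
  finally show ?thesis
    by (simp add: iso_gauss_density_def norm_from_coords_sq prod_ennreal)
qed

lemma density_PiM_lborel_iso_gauss_from_coords:
  assumes v: "v > 0"
  shows "density (PiM Basis (\<lambda>_. lborel)) (\<lambda>f. ennreal (iso_gauss_density 0 v (from_coords f)))
       = (gauss_coords v :: ('a::euclidean_space \<Rightarrow> real) measure)"
    (is "density ?L ?g = _")
  unfolding gauss_coords_def
proof (rule product_sigma_finite.PiM_eqI)
  let ?N = "density lborel (\<lambda>t. ennreal (normal_density 0 (sqrt v) t))"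
  show "product_sigma_finite (\<lambda>_::'a. ?N)"
    unfolding product_sigma_finite_def
    using prob_space_normal_density[of "sqrt v" 0] v by (simp add: prob_space_imp_sigma_finite)
  show "sets (density ?L ?g) = sets (PiM Basis (\<lambda>_. ?N))"
    unfolding sets_density by (intro sets_PiM_cong) auto
  fix A :: "'a \<Rightarrow> real set" assume A: "\<And>i. i \<in> Basis \<Longrightarrow> A i \<in> sets ?N"
  have [measurable]: "from_coords \<in> borel_measurable ?L"
    by (rule measurable_from_coords) simp
  have "Pi\<^sub>E Basis A \<in> sets ?L" using A by (intro sets_PiM_I_finite) auto
  then have "emeasure (density ?L ?g) (Pi\<^sub>E Basis A) = (\<integral>\<^sup>+f. ?g f * indicator (Pi\<^sub>E Basis A) f \<partial>?L)"
    by (rule emeasure_density[rotated]) measurable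
  also have "\<dots> = (\<integral>\<^sup>+f. (\<Prod>b\<in>Basis. ennreal (normal_density 0 (sqrt v) (f b)) * indicator (A b) (f b)) \<partial>?L)"
  proof (rule nn_integral_cong)
    fix f assume "f \<in> space ?L"
    then have "(indicator (Pi\<^sub>E Basis A) f :: ennreal) = (\<Prod>b\<in>Basis. indicator (A b) (f b))"
      by (auto simp: space_PiM indicator_def PiE_iff intro!: prod_zero)
    then show "?g f * indicator (Pi\<^sub>E Basis A) f
        = (\<Prod>b\<in>Basis. ennreal (normal_density 0 (sqrt v) (f b)) * indicator (A b) (f b))"
      by (simp only: iso_gauss_density_from_coords[OF v] prod.distrib)
  qed
  also have "\<dots> = (\<Prod>b\<in>Basis. \<integral>\<^sup>+t. ennreal (normal_density 0 (sqrt v) t) * indicator (A b) t \<partial>lborel)"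
    using A by (subst product_sigma_finite.product_nn_integral_prod)
      (simp_all add: product_sigma_finite_def sigma_finite_lborel)
  also have "\<dots> = (\<Prod>b\<in>Basis. emeasure ?N (A b))"
    using A by (intro prod.cong refl) (simp add: emeasure_density)
  finally show "emeasure (density ?L ?g) (Pi\<^sub>E Basis A) = (\<Prod>b\<in>Basis. emeasure ?N (A b))" .
qed simp

lemma iso_gauss_eq_distr_gauss_coords:
  assumes v: "v > 0"
  shows "iso_gauss (0::'a::euclidean_space) v = distr (gauss_coords v) borel from_coords"
proof -
  let ?L = "PiM (Basis::'a set) (\<lambda>_. lborel::real measure)"
  have [measurable]: "from_coords \<in> borel_measurable ?L"
    by (rule measurable_from_coords) simp
  have "iso_gauss (0::'a) v = density (distr ?L borel from_coords) (\<lambda>x. ennreal (iso_gauss_density 0 v x))"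
    unfolding iso_gauss_def from_coords_def by (subst lborel_eq) rule
  also have "\<dots> = distr (density ?L (\<lambda>f. ennreal (iso_gauss_density 0 v (from_coords f)))) borel from_coords"
    by (rule density_distr) auto
  finally show ?thesis
    by (simp only: density_PiM_lborel_iso_gauss_from_coords[OF v])
qed

lemma prob_space_iso_gauss_0:
  "v > 0 \<Longrightarrow> prob_space (iso_gauss (0::'a::euclidean_space) v)"
  unfolding iso_gauss_eq_distr_gauss_coords
  by (rule prob_space.prob_space_distr[OF prob_space_gauss_coords measurable_from_coords_gauss_coords])

lemma distributed_iso_gauss_inner:
  fixes \<theta> :: "'a::euclidean_space"
  assumes v: "v > 0" and \<theta>: "\<theta> \<noteq> 0"
  shows "distributed (iso_gauss 0 v) lborel (\<lambda>x. x \<bullet> \<theta>) (normal_density 0 (sqrt v * norm \<theta>))"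
proof -
  interpret P: prob_space "gauss_coords v :: ('a \<Rightarrow> real) measure"
    by (rule prob_space_gauss_coords[OF v])
  \<comment> \<open>Coordinates orthogonal to \<open>\<theta>\<close> are dropped: \<open>normal_density_affine\<close> needs a nonzero factor.\<close>
  define I where "I = {b\<in>(Basis::'a set). b \<bullet> \<theta> \<noteq> 0}"
  have I: "finite I" "I \<noteq> {}" "I \<subseteq> Basis"
    using \<theta> by (auto simp: I_def) (metis euclidean_all_zero_iff inner_commute)
  have inner_eq: "from_coords f \<bullet> \<theta> = (\<Sum>b\<in>I. (b \<bullet> \<theta>) * f b)" for f
  proof -
    have "(\<Sum>b\<in>Basis. f b * (b \<bullet> \<theta>)) = (\<Sum>b\<in>I. f b * (b \<bullet> \<theta>))"
      by (rule sum.mono_neutral_right) (auto simp: I_def)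
    then show ?thesis by (simp add: inner_from_coords mult.commute)
  qed
  have sum_sq: "(\<Sum>b\<in>I. (b \<bullet> \<theta>)\<^sup>2) = (norm \<theta>)\<^sup>2"
  proof -
    have "(\<Sum>b\<in>Basis. (b \<bullet> \<theta>)\<^sup>2) = (norm \<theta>)\<^sup>2"
      by (subst power2_norm_eq_inner) (simp add: euclidean_inner[of \<theta> \<theta>] power2_eq_square inner_commute)
    then show ?thesis
      by (subst sum.mono_neutral_left[of Basis]) (auto simp: I_def)
  qed
  have indep: "P.indep_vars (\<lambda>_. borel) (\<lambda>b f. (b \<bullet> \<theta>) * f b) I"
    using P.indep_vars_compose2[OF P.indep_vars_subset[OF indep_vars_gauss_coords[OF v] I(3)],
        of "\<lambda>b x. (b \<bullet> \<theta>) * x" "\<lambda>_. borel"]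
    by simp
  have "distributed (gauss_coords v) lborel (\<lambda>f. from_coords f \<bullet> \<theta>)
      (normal_density 0 (sqrt (\<Sum>b\<in>I. (\<bar>b \<bullet> \<theta>\<bar> * sqrt v)\<^sup>2)))"
    unfolding inner_eq
    using P.sum_indep_normal[OF I(1,2) indep, of "\<lambda>b. \<bar>b \<bullet> \<theta>\<bar> * sqrt v" "\<lambda>_. 0"]
      P.normal_density_affine[OF distributed_gauss_coords_component[OF v], of _ "_ \<bullet> \<theta>" 0] v
    by (auto simp: I_def)
  also have "sqrt (\<Sum>b\<in>I. (\<bar>b \<bullet> \<theta>\<bar> * sqrt v)\<^sup>2) = sqrt v * norm \<theta>"
    using v by (simp add: power_mult_distrib sum_distrib_right[symmetric] sum_sq real_sqrt_mult)
  finally have W: "distributed (gauss_coords v) lborel (\<lambda>f. from_coords f \<bullet> \<theta>) (normal_density 0 (sqrt v * norm \<theta>))" .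
  have "distr (iso_gauss 0 v) lborel (\<lambda>x. x \<bullet> \<theta>) = distr (gauss_coords v) lborel (\<lambda>f. from_coords f \<bullet> \<theta>)"
    unfolding iso_gauss_eq_distr_gauss_coords[OF v]
    by (subst distr_distr) (auto simp: comp_def measurable_from_coords_gauss_coords)
  then show ?thesis
    using W by (auto simp: distributed_def measurable_cong_sets[OF sets_iso_gauss refl])
qed

lemma (in prob_space) prob_le_eq_Phi:
  assumes "distributed M lborel Z std_normal_density"
  shows "prob {x \<in> space M. Z x \<le> t} = Phi t"
proof -
  have Z: "Z \<in> measurable M lborel" and D: "distr M lborel Z = density lborel std_normal_density"
    using assms by (auto simp: distributed_def)
  have "Phi t = measure (distr M lborel Z) {..t}"
    unfolding Phi_def cdf_def D ..
  also have "\<dots> = prob (Z -` {..t} \<inter> space M)"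
    using Z by (subst measure_distr) auto
  finally show ?thesis by (simp add: vimage_def Int_def conj_commute)
qed

lemma (in prob_space) two_Phi_le_prob_abs_normal:
  assumes X: "distributed M lborel X (normal_density 0 s)" and s: "s > 0"
    and a: "a > 0" and "c \<le> s"
  shows "2 * Phi (- a) \<le> prob {x \<in> space M. a * c \<le> \<bar>X x\<bar>}"
proof -
  have Z: "distributed M lborel (\<lambda>x. X x / s) std_normal_density"
    using normal_standard_normal_convert[OF s, of X 0] X by simp
  have Z': "distributed M lborel (\<lambda>x. - (X x / s)) std_normal_density"
    using normal_density_affine[OF Z, of "-1" 0] by simp
  have events: "{x \<in> space M. X x / s \<le> - a} \<in> events" "{x \<in> space M. - (X x / s) \<le> - a} \<in> events"
    "{x \<in> space M. a * c \<le> \<bar>X x\<bar>} \<in> events"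
    using X by (auto simp: distributed_def)
  have "a * c \<le> a * s" using \<open>c \<le> s\<close> a by simp
  then have subset: "{x \<in> space M. X x / s \<le> - a} \<union> {x \<in> space M. - (X x / s) \<le> - a}
      \<subseteq> {x \<in> space M. a * c \<le> \<bar>X x\<bar>}"
    using s by (auto simp: field_simps)
  have "2 * Phi (- a) = prob {x \<in> space M. X x / s \<le> - a} + prob {x \<in> space M. - (X x / s) \<le> - a}"
    using prob_le_eq_Phi[OF Z, of "-a"] prob_le_eq_Phi[OF Z', of "-a"] by simp
  also have "\<dots> = prob ({x \<in> space M. X x / s \<le> - a} \<union> {x \<in> space M. - (X x / s) \<le> - a})"
    using events a by (intro finite_measure_Union[symmetric]) auto
  also have "\<dots> \<le> prob {x \<in> space M. a * c \<le> \<bar>X x\<bar>}"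
    using events subset by (intro finite_measure_mono) auto
  finally show ?thesis .
qed

lemma two_Phi_le_iso_gauss_abs_inner:
  fixes \<theta> :: "'a::euclidean_space"
  assumes \<theta>: "\<theta> \<noteq> 0" and a: "a > 0" and v: "(norm \<theta>)\<^sup>2 \<le> v"
  shows "2 * Phi (- a) \<le> measure (iso_gauss 0 v) {x. a * (norm \<theta>)\<^sup>2 \<le> \<bar>x \<bullet> \<theta>\<bar>}"
proof -
  have v0: "v > 0" using v \<theta> by (smt (verit) zero_less_norm_iff zero_less_power)
  interpret G: prob_space "iso_gauss (0::'a) v" by (rule prob_space_iso_gauss_0[OF v0])
  have "norm \<theta> \<le> sqrt v" using v by (simp add: real_le_rsqrt)
  then have "(norm \<theta>)\<^sup>2 \<le> sqrt v * norm \<theta>"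
    unfolding power2_eq_square by (intro mult_right_mono) auto
  then show ?thesis
    using G.two_Phi_le_prob_abs_normal[OF distributed_iso_gauss_inner[OF v0 \<theta>] _ a] v0 \<theta>
    by (simp add: iso_gauss_def)
qed

lemma iso_gauss_density_nonneg: "0 \<le> iso_gauss_density mu v x"
  by (simp add: iso_gauss_density_def)

lemma nn_integral_iso_gauss_density:
  fixes mu :: "'a::euclidean_space"
  assumes v: "v > 0"
  shows "(\<integral>\<^sup>+x. ennreal (iso_gauss_density mu v x) \<partial>lborel) = 1"
proof -
  interpret G: prob_space "iso_gauss (0::'a) v" by (rule prob_space_iso_gauss_0[OF v])
  have "(\<integral>\<^sup>+x. ennreal (iso_gauss_density mu v x) \<partial>lborel)
      = (\<integral>\<^sup>+x. ennreal (iso_gauss_density 0 v x) \<partial>distr lborel borel ((+) (- mu)))"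
    by (subst nn_integral_distr) (auto simp: iso_gauss_density_def)
  also have "\<dots> = emeasure (iso_gauss (0::'a) v) (space (iso_gauss (0::'a) v))"
    unfolding lborel_distr_plus iso_gauss_def by (subst emeasure_density) auto
  finally show ?thesis using G.emeasure_space_1 by simp
qed

lemma prob_space_sym_mixture:
  fixes theta :: "'a::euclidean_space"
  assumes sg: "sg > 0"
  shows "prob_space (sym_mixture theta sg)"
proof
  let ?g = "\<lambda>m x. ennreal (iso_gauss_density m (sg\<^sup>2) x)"
  have "emeasure (sym_mixture theta sg) (space (sym_mixture theta sg))
      = (\<integral>\<^sup>+x. ennreal (1/2) * ?g theta x + ennreal (1/2) * ?g (- theta) x \<partial>lborel)"
  proof -
    have "ennreal (1/2 * a + 1/2 * b) = ennreal (1/2) * ennreal a + ennreal (1/2) * ennreal b"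
      if "a \<ge> 0" "b \<ge> 0" for a b :: real
      using that ennreal_plus[of "1/2 * a" "1/2 * b"] ennreal_mult'[of "1/2" a] ennreal_mult'[of "1/2" b]
      by (simp only: mult_nonneg_nonneg zero_le_divide_1_iff zero_le_numeral)
    then show ?thesis
      unfolding sym_mixture_def
      by (subst emeasure_density) (auto intro!: nn_integral_cong simp: iso_gauss_density_nonneg)
  qed
  also have "\<dots> = ennreal (1/2) * 1 + ennreal (1/2) * 1"
    using sg by (simp add: nn_integral_add nn_integral_cmult nn_integral_iso_gauss_density)
  also have "\<dots> = 1"
    using ennreal_plus[of "1/2" "1/2"] by (simp del: ennreal_half)
  finally show "emeasure (sym_mixture theta sg) (space (sym_mixture theta sg)) = 1" .
qed

lemma emeasure_chi2_greaterThan_finite: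
  assumes "t > 0"
  shows "emeasure (chi2 DIM('a::euclidean_space)) {t <..} < \<infinity>"
proof -
  interpret G: prob_space "iso_gauss (0::'a) 1" by (rule prob_space_iso_gauss_0) simp
  have "emeasure (chi2 DIM('a)) {t <..} = emeasure (iso_gauss (0::'a) 1) {x. norm x > sqrt t}"
    using emeasure_iso_gauss_norm_greater_chi2[of 1 "sqrt t", where 'a='a] assms by simp
  also have "\<dots> < \<infinity>" by (simp add: less_top[symmetric])
  finally show ?thesis .
qed

lemma iso_gauss_D_tilde_lower_bound:
  fixes theta :: "'a::euclidean_space" and v a r :: real
  assumes th: "theta \<noteq> 0" and a: "0 < a" and r: "r \<ge> 1"
    and v1: "(norm theta)\<^sup>2 \<le> v" and v2: "v \<le> 2 * (norm theta)\<^sup>2"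
  shows "2 * Phi (- a) - measure (chi2 DIM('a)) {r\<^sup>2 / 2 <..} \<le> measure (iso_gauss 0 v) (D_tilde theta a r)"
proof -
  have v: "v > 0" using v1 th by (smt (verit) zero_less_norm_iff zero_less_power)
  interpret G: prob_space "iso_gauss (0::'a) v" by (rule prob_space_iso_gauss_0[OF v])
  define A where "A = {x::'a. a * (norm theta)\<^sup>2 \<le> \<bar>x \<bullet> theta\<bar>}"
  define C where "C = {x::'a. norm x > r * norm theta}"
  have [simp]: "A \<in> sets borel" "C \<in> sets borel" "D_tilde theta a r \<in> sets borel"
    unfolding A_def C_def D_tilde_def by measurable
  have "A \<subseteq> D_tilde theta a r \<union> C"
    unfolding A_def C_def D_tilde_def by auto
  then have "G.prob A \<le> G.prob (D_tilde theta a r \<union> C)"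
    by (intro G.finite_measure_mono) auto
  also have "\<dots> \<le> G.prob (D_tilde theta a r) + G.prob C"
    by (rule measure_Un_le) auto
  finally have "G.prob A \<le> G.prob (D_tilde theta a r) + G.prob C" .
  moreover have "2 * Phi (- a) \<le> G.prob A"
    unfolding A_def by (rule two_Phi_le_iso_gauss_abs_inner[OF th a v1])
  moreover have "G.prob C \<le> measure (chi2 DIM('a)) {r\<^sup>2 / 2 <..}"
  proof -
    have "r\<^sup>2 * v \<le> r\<^sup>2 * (2 * (norm theta)\<^sup>2)"
      using v2 by (intro mult_left_mono) auto
    then have "r\<^sup>2 / 2 \<le> (r * norm theta)\<^sup>2 / v"
      using v by (simp add: field_simps power_mult_distrib)
    then have "emeasure (chi2 DIM('a)) {(r * norm theta)\<^sup>2 / v <..} \<le> emeasure (chi2 DIM('a)) {r\<^sup>2 / 2 <..}"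
      by (intro emeasure_mono) (auto simp: chi2_def)
    moreover have "emeasure (chi2 DIM('a)) {r\<^sup>2 / 2 <..} < \<infinity>"
      using r by (intro emeasure_chi2_greaterThan_finite) simp
    moreover have "r * norm theta > 0" using r th by simp
    ultimately show ?thesis
      unfolding C_def measure_def
      by (simp add: emeasure_iso_gauss_norm_greater_chi2[OF v] enn2real_mono)
  qed
  ultimately show ?thesis by linarith
qed

lemma measurable_iso_gauss_kernel:
  assumes [measurable]: "f \<in> borel_measurable M" and c: "c > 0"
  shows "(\<lambda>x. iso_gauss (0::'a::euclidean_space) (max (f x) 0 + c)) \<in> measurable M (subprob_algebra lborel)"
proof (rule measurable_subprob_algebra)
  fix x
  show "subprob_space (iso_gauss (0::'a) (max (f x) 0 + c))"
    using c by (intro prob_space_imp_subprob_space prob_space_iso_gauss_0) auto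
  show "sets (iso_gauss (0::'a) (max (f x) 0 + c)) = sets lborel" by simp
next
  fix A :: "'a set" assume A[measurable]: "A \<in> sets lborel"
  have "emeasure (iso_gauss 0 w) A = (\<integral>\<^sup>+y. ennreal (iso_gauss_density 0 w y) * indicator A y \<partial>lborel)" for w
    unfolding iso_gauss_def by (rule emeasure_density) (use A in auto)
  moreover have "(\<lambda>x. \<integral>\<^sup>+y. ennreal (iso_gauss_density 0 (max (f x) 0 + c) y) * indicator A y \<partial>lborel) \<in> borel_measurable M"
    unfolding iso_gauss_density_def by measurable
  ultimately show "(\<lambda>x. emeasure (iso_gauss (0::'a) (max (f x) 0 + c)) A) \<in> borel_measurable M"
    by simp
qed

lemma measure_bind_ge_on_event:
  assumes M: "prob_space M" and K: "K \<in> measurable M (subprob_algebra N)"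
    and A: "A \<in> sets N" and E: "E \<in> sets M"
    and bound: "\<And>x. x \<in> E \<Longrightarrow> q \<le> measure (K x) A"
  shows "q * measure M E \<le> measure (M \<bind> K) A"
proof (cases "q \<le> 0")
  case True
  then show ?thesis by (meson measure_nonneg mult_nonpos_nonneg order_trans)
next
  case False
  interpret M: prob_space M by (rule M)
  interpret B: subprob_space "M \<bind> K"
    by (rule subprob_space_bind[OF _ K]) (rule M.prob_space_axioms[THEN prob_space_imp_subprob_space])
  have "ennreal (q * measure M E) = (\<integral>\<^sup>+x. ennreal q * indicator E x \<partial>M)"
    using False E by (simp add: M.emeasure_eq_measure ennreal_mult nn_integral_cmult_indicator)
  also have "\<dots> \<le> (\<integral>\<^sup>+x. emeasure (K x) A \<partial>M)"
  proof (rule nn_integral_mono)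
    fix x assume "x \<in> space M"
    then interpret Kx: subprob_space "K x" by (rule subprob_space_kernel[OF K])
    show "ennreal q * indicator E x \<le> emeasure (K x) A"
      using bound[of x] by (simp add: Kx.emeasure_eq_measure split: split_indicator)
  qed
  also have "\<dots> = emeasure (M \<bind> K) A"
    by (rule emeasure_bind[symmetric, OF M.not_empty K A])
  finally show ?thesis
    by (simp add: B.emeasure_eq_measure)
qed

lemma pos_part_add_half_sq_bounds:
  fixes t s R :: real
  assumes "0 < s" "s \<le> R" "\<bar>t - R\<^sup>2\<bar> < s\<^sup>2 / 2"
  shows "R\<^sup>2 \<le> max t 0 + s\<^sup>2 / 2" "max t 0 + s\<^sup>2 / 2 \<le> 2 * R\<^sup>2"
proof -
  have t: "R\<^sup>2 - s\<^sup>2 / 2 < t" "t < R\<^sup>2 + s\<^sup>2 / 2"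
    using assms(3) abs_less_iff[of "t - R\<^sup>2" "s\<^sup>2 / 2"] by linarith+
  have "s\<^sup>2 \<le> R\<^sup>2" using assms by (intro power_mono) auto
  moreover have "s\<^sup>2 > 0" using assms by simp
  ultimately have "max t 0 = t" using t by simp
  then show "R\<^sup>2 \<le> max t 0 + s\<^sup>2 / 2" "max t 0 + s\<^sup>2 / 2 \<le> 2 * R\<^sup>2"
    using t \<open>s\<^sup>2 \<le> R\<^sup>2\<close> by linarith+
qed

theorem proposition2:
  fixes theta :: "'a::euclidean_space" and sg a r :: real and n :: nat
  assumes "sg > 0" and "theta \<noteq> 0"
    and "norm theta / sg \<ge> 1"
    and "0 < a" and "a < 1" and "r \<ge> 1"
  shows "measure (theta0_law n theta sg) (D_tilde theta a r) \<ge>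
     (2 * Phi (- a) - measure (chi2 DIM('a)) {r\<^sup>2 / 2 <..}) *
     measure (sample_law n theta sg)
        {Y \<in> space (sample_law n theta sg). \<bar>T_hat n sg Y - (norm theta)\<^sup>2\<bar> < sg\<^sup>2 / 2}"
proof -
  let ?S = "sample_law n theta sg"
  have sg: "sg \<le> norm theta" using assms(1,3) by (simp add: field_simps)
  have S: "prob_space ?S"
    unfolding sample_law_def by (intro prob_space_PiM prob_space_sym_mixture assms(1))
  have "T_hat n sg \<in> borel_measurable ?S"
    unfolding T_hat_def sample_law_def by measurable
  then have K: "(\<lambda>Y. iso_gauss 0 (T_hat_plus n sg Y + sg\<^sup>2 / 2)) \<in> measurable ?S (subprob_algebra lborel)"
    unfolding T_hat_plus_def using assms(1) by (intro measurable_iso_gauss_kernel) auto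
  have D: "D_tilde theta a r \<in> sets lborel"
    unfolding D_tilde_def by measurable
  have E: "{Y \<in> space ?S. \<bar>T_hat n sg Y - (norm theta)\<^sup>2\<bar> < sg\<^sup>2 / 2} \<in> sets ?S"
    unfolding sample_law_def T_hat_def by measurable
  show ?thesis
    unfolding theta0_law_def
  proof (rule measure_bind_ge_on_event[OF S K D E])
    fix Y assume "Y \<in> {Y \<in> space ?S. \<bar>T_hat n sg Y - (norm theta)\<^sup>2\<bar> < sg\<^sup>2 / 2}"
    then show "2 * Phi (- a) - measure (chi2 DIM('a)) {r\<^sup>2 / 2 <..}
        \<le> measure (iso_gauss 0 (T_hat_plus n sg Y + sg\<^sup>2 / 2)) (D_tilde theta a r)"
      unfolding T_hat_plus_def
      using iso_gauss_D_tilde_lower_bound[OF assms(2,4,6) pos_part_add_half_sq_bounds[OF assms(1) sg]]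
      by auto
  qed
qed

end
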